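(* Let $\mathcal U$ be a finite set and $R$ an $n(R)$-place relation on $\mathcal U$. Then $\lambda_1(R)\le\lambda'_0(R)+1$, and if equality holds then $\lambda_1(R)\le 2^{2^{n(R)^2}}$.
   Context: For $a\in\mathcal U$ and $A\subseteq\mathcal U$, $\mathrm{tp}_{\mathrm{bs}}(a,A,R)$ is the set of formulas $\varphi(x,\bar a)$ with $\bar a$ a tuple from $A$ and $\varphi(x,\bar y)$ an atomic or negated atomic formula in the vocabulary $\{R,=\}$ such that $(\mathcal U,R)\models\varphi(a,\bar a)$. $\lambda_1(R)=\max_{A\subseteq\mathcal U}|\{\mathrm{tp}_{\mathrm{bs}}(a,A,R):a\in\mathcal U\setminus A\}|$. For $A\subseteq\mathcal U$ and $n(R)$-tuples $\bar b,\bar c$, $\bar b\approx_A\bar c$ means: $b_i\in A\iff c_i\in A$; $b_i\in A\Rightarrow b_i=c_i$; and $b_i=b_j\iff c_i=c_j$. $\lambda'_0(R)$ is the least $|A|$ over $A\subseteq\mathcal U$ such that $\bar b\approx_A\bar c$ implies ($R(\bar b)\iff R(\bar c)$) for all $n(R)$-tuples $\bar b,\bar c$ from $\mathcal U$. *)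

theory Defs
  imports Main
begin

text \<open>The universe U is the (finite) type 'a; an n-place relation R is a predicate on
  lists, only evaluated on lists of length n.\<close>

text \<open>Terms in the one free variable x, with parameters (elements of U).\<close>
datatype 'a trm = TX | TP 'a

datatype 'a atm = ARel "'a trm list" | AEq "'a trm" "'a trm"

datatype 'a lit = Pos "'a atm" | Neg "'a atm"

fun trm_params :: "'a trm \<Rightarrow> 'a set" where
  "trm_params TX = {}"
| "trm_params (TP c) = {c}"

fun atm_params :: "'a atm \<Rightarrow> 'a set" where
  "atm_params (ARel ts) = \<Union>(trm_params ` set ts)"
| "atm_params (AEq s t) = trm_params s \<union> trm_params t"

fun lit_params :: "'a lit \<Rightarrow> 'a set" where
  "lit_params (Pos p) = atm_params p"
| "lit_params (Neg p) = atm_params p"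

fun atm_wf :: "nat \<Rightarrow> 'a atm \<Rightarrow> bool" where
  "atm_wf n (ARel ts) = (length ts = n)"
| "atm_wf n (AEq s t) = True"

fun lit_wf :: "nat \<Rightarrow> 'a lit \<Rightarrow> bool" where
  "lit_wf n (Pos p) = atm_wf n p"
| "lit_wf n (Neg p) = atm_wf n p"

fun trm_val :: "'a \<Rightarrow> 'a trm \<Rightarrow> 'a" where
  "trm_val a TX = a"
| "trm_val a (TP c) = c"

fun atm_sat :: "('a list \<Rightarrow> bool) \<Rightarrow> 'a \<Rightarrow> 'a atm \<Rightarrow> bool" where
  "atm_sat R a (ARel ts) = R (map (trm_val a) ts)"
| "atm_sat R a (AEq s t) = (trm_val a s = trm_val a t)"

fun lit_sat :: "('a list \<Rightarrow> bool) \<Rightarrow> 'a \<Rightarrow> 'a lit \<Rightarrow> bool" where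
  "lit_sat R a (Pos p) = atm_sat R a p"
| "lit_sat R a (Neg p) = (\<not> atm_sat R a p)"

definition tp_bs :: "nat \<Rightarrow> ('a list \<Rightarrow> bool) \<Rightarrow> 'a \<Rightarrow> 'a set \<Rightarrow> 'a lit set" where
  "tp_bs n R a A = {\<phi>. lit_wf n \<phi> \<and> lit_params \<phi> \<subseteq> A \<and> lit_sat R a \<phi>}"

definition lambda1 :: "nat \<Rightarrow> ('a::finite list \<Rightarrow> bool) \<Rightarrow> nat" where
  "lambda1 n R = Max {card {tp_bs n R a A | a. a \<notin> A} | A. True}"

definition approx_on :: "'a set \<Rightarrow> 'a list \<Rightarrow> 'a list \<Rightarrow> bool" where
  "approx_on A b c \<longleftrightarrow> length b = length c \<and>
     (\<forall>i < length b. (b ! i \<in> A \<longleftrightarrow> c ! i \<in> A) \<and> (b ! i \<in> A \<longrightarrow> b ! i = c ! i)) \<and>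
     (\<forall>i < length b. \<forall>j < length b. (b ! i = b ! j \<longleftrightarrow> c ! i = c ! j))"

definition lambda0' :: "nat \<Rightarrow> ('a::finite list \<Rightarrow> bool) \<Rightarrow> nat" where
  "lambda0' n R = (LEAST k. \<exists>A::'a set. card A = k \<and>
     (\<forall>b c. length b = n \<longrightarrow> length c = n \<longrightarrow> approx_on A b c \<longrightarrow> (R b \<longleftrightarrow> R c)))"

end

theory Submission
  imports Defs
begin

text \<open>Fix a set \<open>A\<^sub>0\<close> of size \<open>\<lambda>'\<^sub>0(R)\<close> such that \<open>R\<close> is invariant under \<open>\<approx>\<^bsub>A\<^sub>0\<^esub>\<close>.
  Over any parameter set \<open>A\<close>, all elements outside \<open>A \<union> A\<^sub>0\<close> realise the same basic type,
  so there are at most \<open>|A\<^sub>0 - A| + 1\<close> types. Equality forces \<open>A \<inter> A\<^sub>0 = {}\<close>; then the type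
  of \<open>a \<notin> A\<close> is determined by which equality patterns (a binary relation on the \<open>n\<close>
  positions) are realised by \<open>R\<close>-tuples from \<open>A \<union> {a}\<close>, and there are at most
  \<open>2^(2^(n\<^sup>2))\<close> sets of such patterns.\<close>

lemma card_image_le_if_factors:
  assumes "finite S" and "\<And>x y. x \<in> S \<Longrightarrow> y \<in> S \<Longrightarrow> g x = g y \<Longrightarrow> f x = f y"
  shows "card (f ` S) \<le> card (g ` S)"
proof -
  have "f x = f (inv_into S g (g x))" if "x \<in> S" for x
    using that assms(2) inv_into_into f_inv_into_f by (metis imageI)
  then have "f ` S = (\<lambda>y. f (inv_into S g y)) ` g ` S"
    by (simp add: image_image cong: image_cong)
  then show ?thesis
    using assms(1) by (simp add: card_image_le)
qed

lemma card_image_le_one_if_constant: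
  assumes "finite S" and "\<And>x y. x \<in> S \<Longrightarrow> y \<in> S \<Longrightarrow> f x = f y"
  shows "card (f ` S) \<le> 1"
proof -
  have "\<forall>u\<in>f ` S. \<forall>v\<in>f ` S. u = v"
    using assms(2) by blast
  then show ?thesis
    using assms(1) card_le_Suc0_iff_eq[of "f ` S"] unfolding One_nat_def by blast
qed

definition approx_invariant :: "nat \<Rightarrow> ('a list \<Rightarrow> bool) \<Rightarrow> 'a set \<Rightarrow> bool" where
  "approx_invariant n R A\<^sub>0 \<longleftrightarrow>
     (\<forall>b c. length b = n \<longrightarrow> length c = n \<longrightarrow> approx_on A\<^sub>0 b c \<longrightarrow> (R b \<longleftrightarrow> R c))"

lemma approx_invariantD:
  "approx_invariant n R A\<^sub>0 \<Longrightarrow> length b = n \<Longrightarrow> length c = n \<Longrightarrow> approx_on A\<^sub>0 b c \<Longrightarrow>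
    R b \<longleftrightarrow> R c"
  unfolding approx_invariant_def by blast

definition num_types :: "nat \<Rightarrow> ('a list \<Rightarrow> bool) \<Rightarrow> 'a set \<Rightarrow> nat" where
  "num_types n R A = card ((\<lambda>a. tp_bs n R a A) ` (- A))"

text \<open>The diagonal pair \<open>(i, i)\<close> records that position \<open>i\<close> holds the distinguished element.\<close>

definition eq_pattern :: "'a \<Rightarrow> 'a list \<Rightarrow> (nat \<times> nat) set" where
  "eq_pattern a b = {(i, j). i < length b \<and> j < length b \<and>
     (if i = j then b ! i = a else b ! i = b ! j)}"

definition rel_patterns :: "nat \<Rightarrow> ('a list \<Rightarrow> bool) \<Rightarrow> 'a set \<Rightarrow> 'a \<Rightarrow> (nat \<times> nat) set set" where
  "rel_patterns n R A a = {eq_pattern a b | b. length b = n \<and> set b \<subseteq> insert a A \<and> R b}"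

lemma trm_val_eq_iff:
  assumes "a \<notin> A" "trm_params s \<subseteq> A" "trm_params t \<subseteq> A"
  shows "trm_val a s = trm_val a t \<longleftrightarrow> s = t"
  using assms by (cases s; cases t) auto

lemma trm_val_eq_self_iff:
  assumes "a \<notin> A" "trm_params t \<subseteq> A"
  shows "trm_val a t = a \<longleftrightarrow> t = TX"
  using assms by (cases t) auto

lemma trm_val_in_insert: "trm_params t \<subseteq> A \<Longrightarrow> trm_val a t \<in> insert a A"
  by (cases t) auto

lemma eq_pattern_map_trm_val:
  assumes "a \<notin> A" "\<forall>t\<in>set ts. trm_params t \<subseteq> A"
  shows "eq_pattern a (map (trm_val a) ts) = eq_pattern TX ts"
proof -
  have params: "trm_params (ts ! i) \<subseteq> A" if "i < length ts" for i
    using assms(2) that by simp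
  show ?thesis
    using trm_val_eq_iff[OF assms(1) params params] trm_val_eq_self_iff[OF assms(1) params]
    by (auto simp: eq_pattern_def)
qed

lemma approx_on_map_trm_val:
  assumes "a \<notin> A \<union> A\<^sub>0" "a' \<notin> A \<union> A\<^sub>0" "\<forall>t\<in>set ts. trm_params t \<subseteq> A"
  shows "approx_on A\<^sub>0 (map (trm_val a) ts) (map (trm_val a') ts)"
  unfolding approx_on_def
proof (intro conjI allI impI)
  fix i assume "i < length (map (trm_val a) ts)"
  show "map (trm_val a) ts ! i \<in> A\<^sub>0 \<longleftrightarrow> map (trm_val a') ts ! i \<in> A\<^sub>0"
    and "map (trm_val a) ts ! i \<in> A\<^sub>0 \<Longrightarrow> map (trm_val a) ts ! i = map (trm_val a') ts ! i"
    using \<open>i < _\<close> assms(1,2) by (cases "ts ! i"; simp)+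
next
  fix i j assume "i < length (map (trm_val a) ts)" "j < length (map (trm_val a) ts)"
  then have params: "trm_params (ts ! i) \<subseteq> A" "trm_params (ts ! j) \<subseteq> A"
    using assms(3) by simp_all
  have "a \<notin> A" "a' \<notin> A"
    using assms(1,2) by simp_all
  then show "map (trm_val a) ts ! i = map (trm_val a) ts ! j \<longleftrightarrow>
      map (trm_val a') ts ! i = map (trm_val a') ts ! j"
    using \<open>i < _\<close> \<open>j < _\<close> trm_val_eq_iff[OF _ params] by simp
qed simp

lemma approx_on_if_eq_pattern:
  assumes "set b \<subseteq> insert a A" "set c \<subseteq> insert a A" "length b = length c"
    "eq_pattern a b = eq_pattern a c" "A \<inter> A\<^sub>0 = {}"
  shows "approx_on A\<^sub>0 b c"
  unfolding approx_on_def
proof (intro conjI allI impI)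
  have same_pattern: "(i, j) \<in> eq_pattern a b \<longleftrightarrow> (i, j) \<in> eq_pattern a c" for i j
    using assms(4) by simp
  have in_A\<^sub>0: "x \<in> A\<^sub>0 \<longleftrightarrow> x = a \<and> a \<in> A\<^sub>0" if "x \<in> insert a A" for x
    using that assms(5) by blast
  fix i assume i: "i < length b"
  have "b ! i \<in> set b" "c ! i \<in> set c"
    using i assms(3) by simp_all
  then have "b ! i \<in> insert a A" "c ! i \<in> insert a A"
    using assms(1,2) by blast+
  moreover have "b ! i = a \<longleftrightarrow> c ! i = a"
    using same_pattern[of i i] assms(3) i by (simp add: eq_pattern_def)
  ultimately show "b ! i \<in> A\<^sub>0 \<longleftrightarrow> c ! i \<in> A\<^sub>0" and "b ! i \<in> A\<^sub>0 \<Longrightarrow> b ! i = c ! i"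
    using in_A\<^sub>0 by metis+
  fix j assume "j < length b"
  then show "b ! i = b ! j \<longleftrightarrow> c ! i = c ! j"
    using same_pattern[of i j] assms(3) i by (cases "i = j") (simp_all add: eq_pattern_def)
qed (fact assms(3))

lemma tp_bs_eqI:
  assumes "a \<notin> A" "a' \<notin> A"
    and "\<And>ts. length ts = n \<Longrightarrow> \<forall>t\<in>set ts. trm_params t \<subseteq> A \<Longrightarrow>
           R (map (trm_val a) ts) \<longleftrightarrow> R (map (trm_val a') ts)"
  shows "tp_bs n R a A = tp_bs n R a' A"
proof -
  have "atm_sat R a p \<longleftrightarrow> atm_sat R a' p" if "atm_wf n p" "atm_params p \<subseteq> A" for p
  proof (cases p)
    case (AEq s t)
    then show ?thesis
      using that trm_val_eq_iff[OF assms(1)] trm_val_eq_iff[OF assms(2)] by auto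
  next
    case (ARel ts)
    with that assms(3)[of ts] show ?thesis by auto
  qed
  then have "lit_sat R a \<phi> \<longleftrightarrow> lit_sat R a' \<phi>" if "lit_wf n \<phi>" "lit_params \<phi> \<subseteq> A" for \<phi>
    using that by (cases \<phi>) auto
  then show ?thesis
    unfolding tp_bs_def by blast
qed

lemma tp_bs_eq_outside_support:
  assumes "approx_invariant n R A\<^sub>0" "a \<notin> A \<union> A\<^sub>0" "a' \<notin> A \<union> A\<^sub>0"
  shows "tp_bs n R a A = tp_bs n R a' A"
proof (rule tp_bs_eqI)
  fix ts :: "'a trm list"
  assume "length ts = n" "\<forall>t\<in>set ts. trm_params t \<subseteq> A"
  then show "R (map (trm_val a) ts) \<longleftrightarrow> R (map (trm_val a') ts)"
    using approx_invariantD[OF assms(1)] approx_on_map_trm_val[OF assms(2,3)] by simp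
qed (use assms(2,3) in simp_all)

lemma num_types_le_card_diff_add_one:
  fixes R :: "'a::finite list \<Rightarrow> bool"
  assumes "approx_invariant n R A\<^sub>0"
  shows "num_types n R A \<le> card (A\<^sub>0 - A) + 1"
proof -
  let ?tp = "\<lambda>a. tp_bs n R a A"
  have "- A = (A\<^sub>0 - A) \<union> - (A \<union> A\<^sub>0)"
    by blast
  then have "num_types n R A \<le> card (?tp ` (A\<^sub>0 - A)) + card (?tp ` (- (A \<union> A\<^sub>0)))"
    unfolding num_types_def by (metis card_Un_le image_Un)
  moreover have "card (?tp ` (A\<^sub>0 - A)) \<le> card (A\<^sub>0 - A)"
    by (simp add: card_image_le)
  moreover have "card (?tp ` (- (A \<union> A\<^sub>0))) \<le> 1"
    by (intro card_image_le_one_if_constant tp_bs_eq_outside_support[OF assms]) simp_all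
  ultimately show ?thesis
    by linarith
qed

lemma rel_map_trm_val_if_rel_patterns_eq:
  assumes "approx_invariant n R A\<^sub>0" "A \<inter> A\<^sub>0 = {}" "a \<notin> A" "a' \<notin> A"
    and "rel_patterns n R A a = rel_patterns n R A a'"
    and "length ts = n" "\<forall>t\<in>set ts. trm_params t \<subseteq> A" "R (map (trm_val a) ts)"
  shows "R (map (trm_val a') ts)"
proof -
  let ?b = "map (trm_val a) ts" and ?c = "map (trm_val a') ts"
  have set_b: "set ?b \<subseteq> insert a A" and set_c: "set ?c \<subseteq> insert a' A"
    using assms(7) trm_val_in_insert by fastforce+
  have "eq_pattern a ?b \<in> rel_patterns n R A a"
    unfolding rel_patterns_def using set_b assms(6,8) by (intro CollectI exI[of _ ?b]) simp
  then obtain b where b: "length b = n" "set b \<subseteq> insert a' A" "R b"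
    and pattern: "eq_pattern a' b = eq_pattern a ?b"
    using assms(5) unfolding rel_patterns_def by auto
  have "eq_pattern a' b = eq_pattern a' ?c"
    using pattern eq_pattern_map_trm_val[OF assms(3,7)] eq_pattern_map_trm_val[OF assms(4,7)] by simp
  then have "approx_on A\<^sub>0 b ?c"
    using b(1) assms(6) by (intro approx_on_if_eq_pattern[OF b(2) set_c _ _ assms(2)]) simp_all
  then show ?thesis
    using approx_invariantD[OF assms(1) b(1)] assms(6) b(3) by simp
qed

lemma tp_bs_eq_if_rel_patterns_eq:
  assumes "approx_invariant n R A\<^sub>0" "A \<inter> A\<^sub>0 = {}" "a \<notin> A" "a' \<notin> A"
    and "rel_patterns n R A a = rel_patterns n R A a'"
  shows "tp_bs n R a A = tp_bs n R a' A"
proof (rule tp_bs_eqI[OF assms(3,4)])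
  fix ts :: "'a trm list"
  assume "length ts = n" "\<forall>t\<in>set ts. trm_params t \<subseteq> A"
  then show "R (map (trm_val a) ts) \<longleftrightarrow> R (map (trm_val a') ts)"
    using rel_map_trm_val_if_rel_patterns_eq[OF assms(1-4)] assms(5)
      rel_map_trm_val_if_rel_patterns_eq[OF assms(1,2,4,3)] by metis
qed

lemma rel_patterns_subset_Pow: "rel_patterns n R A a \<subseteq> Pow ({..<n} \<times> {..<n})"
  unfolding rel_patterns_def eq_pattern_def by auto

lemma num_types_le_double_exp:
  fixes R :: "'a::finite list \<Rightarrow> bool"
  assumes "approx_invariant n R A\<^sub>0" "A \<inter> A\<^sub>0 = {}"
  shows "num_types n R A \<le> 2 ^ 2 ^ n\<^sup>2"
proof -
  have "num_types n R A \<le> card (rel_patterns n R A ` (- A))"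
    unfolding num_types_def
    by (intro card_image_le_if_factors tp_bs_eq_if_rel_patterns_eq[OF assms]) simp_all
  also have "\<dots> \<le> card (Pow (Pow ({..<n} \<times> {..<n})))"
    by (intro card_mono) (simp_all add: image_subset_iff rel_patterns_subset_Pow)
  also have "\<dots> = 2 ^ 2 ^ n\<^sup>2"
    by (simp add: card_Pow card_cartesian_product power2_eq_square)
  finally show ?thesis .
qed

lemma approx_on_UNIV_imp_eq: "approx_on UNIV b c \<Longrightarrow> b = c"
  unfolding approx_on_def by (auto intro: nth_equalityI)

lemma approx_invariant_UNIV: "approx_invariant n R UNIV"
  unfolding approx_invariant_def using approx_on_UNIV_imp_eq by blast

lemma lambda0'_witness:
  fixes R :: "'a::finite list \<Rightarrow> bool"
  obtains A\<^sub>0 :: "'a set" where "card A\<^sub>0 = lambda0' n R" "approx_invariant n R A\<^sub>0"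
proof -
  have "\<exists>k. \<exists>A\<^sub>0 :: 'a set. card A\<^sub>0 = k \<and> approx_invariant n R A\<^sub>0"
    using approx_invariant_UNIV by blast
  from LeastI_ex[OF this]
  have "\<exists>A\<^sub>0 :: 'a set. card A\<^sub>0 = lambda0' n R \<and> approx_invariant n R A\<^sub>0"
    unfolding lambda0'_def approx_invariant_def .
  then show thesis
    using that by blast
qed

lemma lambda1_attained:
  fixes R :: "'a::finite list \<Rightarrow> bool"
  obtains A :: "'a set" where "lambda1 n R = num_types n R A"
proof -
  have "{tp_bs n R a A | a. a \<notin> A} = (\<lambda>a. tp_bs n R a A) ` (- A)" for A
    by auto
  then have "lambda1 n R = Max (range (num_types n R))"
    unfolding lambda1_def num_types_def by (simp add: full_SetCompr_eq)
  moreover have "Max (range (num_types n R)) \<in> range (num_types n R)"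
    by (rule Max_in) simp_all
  ultimately show thesis
    using that by (metis rangeE)
qed

theorem fact3p2:
  fixes R :: "'a::finite list \<Rightarrow> bool" and n :: nat
  shows "lambda1 n R \<le> lambda0' n R + 1 \<and>
         (lambda1 n R = lambda0' n R + 1 \<longrightarrow> lambda1 n R \<le> 2 ^ (2 ^ (n ^ 2)))"
proof -
  obtain A\<^sub>0 where A\<^sub>0: "card A\<^sub>0 = lambda0' n R" "approx_invariant n R A\<^sub>0"
    by (rule lambda0'_witness)
  obtain A where A: "lambda1 n R = num_types n R A"
    by (rule lambda1_attained)
  have bound: "lambda1 n R \<le> card (A\<^sub>0 - A) + 1"
    using A num_types_le_card_diff_add_one[OF A\<^sub>0(2)] by simp
  have card_diff: "card (A\<^sub>0 - A) \<le> card A\<^sub>0"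
    by (rule card_mono) auto
  have disjoint: "A \<inter> A\<^sub>0 = {}" if "lambda1 n R = lambda0' n R + 1"
  proof -
    have "card (A\<^sub>0 - A) = card A\<^sub>0"
      using that bound card_diff A\<^sub>0(1) by linarith
    then have "A\<^sub>0 - A = A\<^sub>0"
      by (intro card_subset_eq) auto
    then show ?thesis
      by blast
  qed
  show ?thesis
    using bound card_diff A\<^sub>0(1) A num_types_le_double_exp[OF A\<^sub>0(2) disjoint] by auto
qed

end
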